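(* Let $\rho$ be a rational number with $0<\rho<1$ and $\rho\neq\frac12$. Then there is no integer $n>1$ such that $$n\tan(\pi\rho)=\tan(n\pi\rho).$$ *)

theory Defs
  imports "HOL-Analysis.Analysis"
begin

end

theory Submission
  imports Defs "Jordan_Normal_Form.Char_Poly"
begin

text \<open>With \<open>\<theta> = \<pi>\<rho>\<close> and the root of unity \<open>w = e\<^sup>2\<^sup>i\<^sup>\<theta>\<close>, the equation \<open>n tan \<theta> = tan n\<theta>\<close> becomes
  \<open>(n - 1)(w\<^sup>n\<^sup>+\<^sup>1 - 1) = (n + 1)(w\<^sup>n - w)\<close>. Rearranging according to the parity of \<open>n\<close> writes
  \<open>\<zeta> - 1\<close>, for the root of unity \<open>\<zeta> = w\<^sup>n\<^sup>+\<^sup>1 \<noteq> 1\<close>, as \<open>b\<gamma>\<close> with \<open>b \<ge> 3\<close> and \<open>\<gamma> \<in> \<int>[w]\<close>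
  (for \<open>n = 3\<close> it forces \<open>w\<^sup>2 = 1\<close> instead). This is impossible: some power \<open>\<omega>\<close> of \<open>\<zeta>\<close> has
  prime order \<open>p\<close> and \<open>\<omega> - 1\<close> is still divisible by \<open>b\<close> in \<open>\<int>[w]\<close>; expanding \<open>(1 + (\<omega> - 1))\<^sup>p = 1\<close>
  then yields \<open>b \<bar> p\<close> and finally \<open>p \<bar> 1\<close>. Divisibility in \<open>\<int>[w]\<close> between integers is
  divisibility in \<open>\<int>\<close>, because elements of \<open>\<int>[w]\<close> are eigenvalues of integer matrices and
  hence algebraic integers.\<close>

definition int_adjoin :: "'a :: comm_ring_1 \<Rightarrow> 'a set" where
  "int_adjoin z = range (\<lambda>h. poly (of_int_poly h) z)"

lemma int_adjoin_of_int [intro]: "of_int c \<in> int_adjoin z"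
  unfolding int_adjoin_def by (rule range_eqI[of _ _ "monom c 0"]) (simp add: poly_monom)

lemma int_adjoin_self [intro]: "z \<in> int_adjoin z"
  unfolding int_adjoin_def by (rule range_eqI[of _ _ "[:0, 1:]"]) simp

lemma int_adjoin_add [intro]: "x \<in> int_adjoin z \<Longrightarrow> y \<in> int_adjoin z \<Longrightarrow> x + y \<in> int_adjoin z"
  unfolding int_adjoin_def by (auto simp flip: poly_add of_int_poly_hom.hom_add)

lemma int_adjoin_mult [intro]: "x \<in> int_adjoin z \<Longrightarrow> y \<in> int_adjoin z \<Longrightarrow> x * y \<in> int_adjoin z"
  unfolding int_adjoin_def by (auto simp flip: poly_mult of_int_poly_hom.hom_mult)

lemma int_adjoin_of_nat [intro]: "of_nat n \<in> int_adjoin z"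
  using int_adjoin_of_int[of "int n"] by simp

lemma int_adjoin_one [intro]: "1 \<in> int_adjoin z"
  using int_adjoin_of_int[of 1] by simp

lemma int_adjoin_uminus [intro]: "x \<in> int_adjoin z \<Longrightarrow> - x \<in> int_adjoin z"
  using int_adjoin_mult[OF int_adjoin_of_int[of "-1"]] by simp

lemma int_adjoin_diff [intro]: "x \<in> int_adjoin z \<Longrightarrow> y \<in> int_adjoin z \<Longrightarrow> x - y \<in> int_adjoin z"
  unfolding diff_conv_add_uminus by blast

lemma int_adjoin_power [intro]: "x \<in> int_adjoin z \<Longrightarrow> x ^ n \<in> int_adjoin z"
  by (induction n) auto

lemma int_adjoin_sum [intro]: "(\<And>i. i \<in> A \<Longrightarrow> f i \<in> int_adjoin z) \<Longrightarrow> sum f A \<in> int_adjoin z"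
  by (induction A rule: infinite_finite_induct) (auto intro: int_adjoin_of_nat[of 0, simplified])

lemma algebraic_int_eigenvalue_of_int_mat:
  fixes A :: "int mat" and x :: "'a :: field_char_0"
  assumes A: "A \<in> carrier_mat n n" and ev: "eigenvalue (map_mat of_int A) x"
  shows "algebraic_int x"
proof -
  have "poly (char_poly (map_mat of_int A)) x = 0"
    using ev A by (simp add: eigenvalue_root_char_poly)
  hence "poly (of_int_poly (char_poly A)) x = 0"
    by (simp add: of_int_hom.char_poly_hom[OF A])
  moreover have "lead_coeff (char_poly A) = 1"
    using degree_monic_char_poly[OF A] by simp
  ultimately show ?thesis
    unfolding algebraic_int_altdef_ipoly by blast
qed

lemma power_mod_order:
  fixes z :: "'a :: monoid_mult"
  assumes "z ^ N = 1"
  shows "z ^ (m mod N) = z ^ m"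
proof -
  have "z ^ m = (z ^ N) ^ (m div N) * z ^ (m mod N)"
    by (simp flip: power_mult power_add)
  thus ?thesis using assms by simp
qed

text \<open>Multiplication by \<open>poly h z\<close> on \<open>\<int>[z]\<close>, written in the spanning family
  \<open>1, z, \<dots>, z\<^sup>N\<^sup>-\<^sup>1\<close>, is an integer matrix with eigenvector \<open>(z\<^sup>i)\<^sub>i\<^sub><\<^sub>N\<close>.\<close>
lemma algebraic_int_poly_root_of_unity:
  fixes z :: "'a :: field_char_0" and h :: "int poly"
  assumes zN: "z ^ N = 1" and N: "N > 0"
  shows "algebraic_int (poly (of_int_poly h) z)"
proof -
  define A where "A = mat N N (\<lambda>(j, i). \<Sum>k\<le>degree h. if (j + k) mod N = i then coeff h k else 0)"
  define v where "v = vec N (\<lambda>i. z ^ i)"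
  have A: "A \<in> carrier_mat N N" unfolding A_def by simp
  have "map_mat of_int A *\<^sub>v v = poly (of_int_poly h) z \<cdot>\<^sub>v v"
  proof (rule eq_vecI)
    fix j assume "j < dim_vec (poly (of_int_poly h) z \<cdot>\<^sub>v v)"
    hence j: "j < N" by (simp add: v_def)
    have "(map_mat of_int A *\<^sub>v v) $ j =
        (\<Sum>i<N. \<Sum>k\<le>degree h. if (j + k) mod N = i then of_int (coeff h k) * z ^ i else 0)"
      using j by (simp add: A_def v_def scalar_prod_def lessThan_atLeast0 of_int_sum
          sum_distrib_right if_distrib if_distribR cong: if_cong)
    also have "\<dots> = (\<Sum>k\<le>degree h. of_int (coeff h k) * z ^ ((j + k) mod N))"
      using N by (subst sum.swap) (simp add: sum.delta)
    also have "\<dots> = z ^ j * poly (of_int_poly h) z"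
      by (simp add: power_mod_order[OF zN] poly_altdef sum_distrib_left power_add mult_ac)
    finally show "(map_mat of_int A *\<^sub>v v) $ j = (poly (of_int_poly h) z \<cdot>\<^sub>v v) $ j"
      using j by (simp add: v_def mult.commute)
  qed (simp add: A_def v_def)
  moreover have "v \<noteq> 0\<^sub>v N"
    using N by (auto simp: v_def vec_eq_iff)
  ultimately have "eigenvalue (map_mat of_int A) (poly (of_int_poly h) z)"
    using A unfolding eigenvalue_def eigenvector_def by (intro exI[of _ v]) (simp add: v_def)
  thus ?thesis using algebraic_int_eigenvalue_of_int_mat[OF A] by blast
qed

lemma algebraic_int_int_adjoin_root_of_unity:
  fixes z :: "'a :: field_char_0"
  assumes "z ^ N = 1" and "N > 0" and "x \<in> int_adjoin z"
  shows "algebraic_int x"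
  using assms algebraic_int_poly_root_of_unity by (auto simp: int_adjoin_def)

lemma of_int_dvd_if_algebraic_int:
  fixes x :: "'a :: field_char_0"
  assumes "algebraic_int x" and eq: "of_int c * x = of_int d"
  shows "c dvd d"
proof (cases "c = 0")
  case False
  hence "x = of_int d / of_int c" using eq by (simp add: field_simps)
  hence "x \<in> \<int>" using assms(1) by (intro rational_algebraic_int_is_int) auto
  then obtain e where "x = of_int e" by (elim Ints_cases)
  hence "of_int (c * e) = (of_int d :: 'a)" using eq by simp
  hence "d = c * e" by (simp only: of_int_eq_iff)
  thus ?thesis by simp
qed (use eq in simp)

lemma int_adjoin_root_of_unity_dvd:
  fixes z :: "'a :: field_char_0"
  assumes "z ^ N = 1" and "N > 0" and "x \<in> int_adjoin z" and "of_int c * x = of_int d"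
  shows "c dvd d"
  using assms algebraic_int_int_adjoin_root_of_unity of_int_dvd_if_algebraic_int by blast

lemma binomial_expansion_third_order:
  fixes X :: "'a :: comm_ring_1"
  assumes "2 \<le> p"
  shows "(1 + X) ^ p = 1 + of_nat p * X + of_nat (p choose 2) * X\<^sup>2
           + X ^ 3 * (\<Sum>k\<in>{3..p}. of_nat (p choose k) * X ^ (k - 3))"
proof -
  have "(1 + X) ^ p = (\<Sum>k\<le>p. of_nat (p choose k) * X ^ k)"
    using binomial_ring[of X 1 p] by (simp add: add.commute)
  also have "{..p} = {0, 1, 2} \<union> {3..p}"
    using assms by auto
  also have "(\<Sum>k\<in>{0, 1, 2} \<union> {3..p}. of_nat (p choose k) * X ^ k) =
      (\<Sum>k\<in>{0, 1, 2}. of_nat (p choose k) * X ^ k) + (\<Sum>k\<in>{3..p}. of_nat (p choose k) * X ^ k)"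
    by (rule sum.union_disjoint) auto
  also have "(\<Sum>k\<in>{3..p}. of_nat (p choose k) * X ^ k) =
      X ^ 3 * (\<Sum>k\<in>{3..p}. of_nat (p choose k) * X ^ (k - 3))"
    unfolding sum_distrib_left
  proof (rule sum.cong)
    fix k assume "k \<in> {3..p}"
    hence "X ^ k = X ^ 3 * X ^ (k - 3)" by (simp flip: power_add)
    thus "of_nat (p choose k) * X ^ k = X ^ 3 * (of_nat (p choose k) * X ^ (k - 3))"
      by (simp add: mult_ac)
  qed simp
  finally show ?thesis
    by (simp add: numeral_2_eq_2)
qed

lemma power_eq_one_binomial_relation:
  fixes X :: "'a :: idom"
  assumes "(1 + X) ^ p = 1" and "X \<noteq> 0" and "2 \<le> p"
  shows "of_nat p + of_nat (p choose 2) * X + X\<^sup>2 * (\<Sum>k\<in>{3..p}. of_nat (p choose k) * X ^ (k - 3)) = 0"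
proof -
  have "X * (of_nat p + of_nat (p choose 2) * X + X\<^sup>2 * (\<Sum>k\<in>{3..p}. of_nat (p choose k) * X ^ (k - 3))) = 0"
    using binomial_expansion_third_order[OF assms(3), of X] assms(1)
    by (simp add: algebra_simps power2_eq_square power3_eq_cube)
  thus ?thesis using assms(2) by simp
qed

lemma int_dvd_prime_eq:
  fixes b :: int
  assumes "prime p" and "b dvd int p" and "b > 1"
  shows "b = int p"
proof -
  have "b = int (nat b)"
    using assms(3) by simp
  hence "nat b dvd p"
    using assms(2) by (metis int_dvd_int_iff)
  hence "nat b = 1 \<or> nat b = p"
    using assms(1) unfolding prime_nat_iff by blast
  thus ?thesis using assms(3) by auto
qed

text \<open>The relation \<open>p + (p choose 2) X + X\<^sup>2 U = 0\<close> with \<open>X = b\<gamma>\<close> first shows \<open>b \<bar> p\<close>, so \<open>b = p\<close>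
  is odd; then \<open>p\<close> divides \<open>p choose 2\<close> as well, and the same relation divided by \<open>p\<close> shows
  \<open>p \<bar> 1\<close>.\<close>
lemma prime_order_minus_one_not_multiple:
  fixes z \<omega> \<gamma> :: "'a :: field_char_0" and b :: int
  assumes zN: "z ^ N = 1" and N: "N > 0" and p: "prime p"
    and \<omega>p: "\<omega> ^ p = 1" and \<omega>1: "\<omega> \<noteq> 1"
    and \<gamma>: "\<gamma> \<in> int_adjoin z" and eq: "\<omega> - 1 = of_int b * \<gamma>" and b: "b \<ge> 3"
  shows False
proof -
  have p2: "2 \<le> p" using prime_ge_2_nat[OF p] .
  define X where "X = of_int b * \<gamma>"
  define U where "U = (\<Sum>k\<in>{3..p}. of_nat (p choose k) * X ^ (k - 3))"
  have U: "U \<in> int_adjoin z"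
    unfolding U_def X_def using \<gamma> by blast
  have "(1 + X) ^ p = 1" "X \<noteq> 0"
    using \<omega>p \<omega>1 eq by (auto simp: X_def algebra_simps)
  hence E: "of_nat p + of_nat (p choose 2) * X + X\<^sup>2 * U = 0"
    unfolding U_def using power_eq_one_binomial_relation p2 by blast
  have "- (of_nat (p choose 2) * \<gamma> + of_int b * \<gamma>\<^sup>2 * U) \<in> int_adjoin z"
    using \<gamma> U by blast
  moreover have "of_int b * - (of_nat (p choose 2) * \<gamma> + of_int b * \<gamma>\<^sup>2 * U)
      = of_nat p - (of_nat p + of_nat (p choose 2) * X + X\<^sup>2 * U)"
    by (simp add: X_def algebra_simps power2_eq_square)
  ultimately have "b dvd int p"
    using int_adjoin_root_of_unity_dvd[OF zN N] E by simp
  hence bp: "b = int p"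
    using b by (intro int_dvd_prime_eq[OF p]) simp_all
  hence "odd p"
    using p b prime_odd_nat by simp
  hence "p choose 2 = p * ((p - 1) div 2)"
    by (auto simp: choose_two elim!: oddE)
  hence "of_nat p * (1 + of_nat p * (of_nat ((p - 1) div 2) * \<gamma> + \<gamma>\<^sup>2 * U)) = 0"
    using E unfolding X_def bp by (simp add: algebra_simps power2_eq_square)
  hence "1 + of_nat p * (of_nat ((p - 1) div 2) * \<gamma> + \<gamma>\<^sup>2 * U) = 0"
    using p2 by simp
  hence "of_int (int p) * - (of_nat ((p - 1) div 2) * \<gamma> + \<gamma>\<^sup>2 * U) = of_int 1"
    by (metis add.commute add_eq_0_iff mult_minus_right of_int_1 of_int_of_nat_eq)
  moreover have "- (of_nat ((p - 1) div 2) * \<gamma> + \<gamma>\<^sup>2 * U) \<in> int_adjoin z"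
    using \<gamma> U by blast
  ultimately have "int p dvd 1"
    using int_adjoin_root_of_unity_dvd[OF zN N] by blast
  thus False using p2 by simp
qed

lemma exists_power_of_prime_order:
  fixes \<zeta> :: "'a :: monoid_mult"
  assumes "\<zeta> ^ R = 1" and "R > 0" and "\<zeta> \<noteq> 1"
  obtains m p where "prime p" and "\<zeta> ^ m \<noteq> 1" and "(\<zeta> ^ m) ^ p = 1"
proof -
  define r where "r = (LEAST r. r > 0 \<and> \<zeta> ^ r = 1)"
  have r: "r > 0" "\<zeta> ^ r = 1"
    using LeastI[of "\<lambda>r. r > 0 \<and> \<zeta> ^ r = 1" R] assms unfolding r_def by auto
  have r_min: "\<zeta> ^ s \<noteq> 1" if "0 < s" "s < r" for s
    using not_less_Least[of s "\<lambda>r. r > 0 \<and> \<zeta> ^ r = 1"] that unfolding r_def by auto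
  have "r \<noteq> 1" using r assms(3) by auto
  then obtain p where p: "prime p" "p dvd r" using prime_factor_nat by blast
  then obtain m where m: "r = m * p" by (auto elim: dvdE simp: mult.commute)
  have "0 < m" "m < r"
    using m r prime_gt_1_nat[OF p(1)] by (auto simp: nat_0_less_mult_iff)
  hence "\<zeta> ^ m \<noteq> 1" by (rule r_min)
  moreover have "(\<zeta> ^ m) ^ p = 1"
    using r m by (simp flip: power_mult)
  ultimately show ?thesis using p that by blast
qed

lemma root_of_unity_minus_one_not_multiple:
  fixes z \<gamma> :: "'a :: field_char_0" and b :: int
  assumes zN: "z ^ N = 1" and N: "N > 0" and zk: "z ^ k \<noteq> 1"
    and \<gamma>: "\<gamma> \<in> int_adjoin z" and eq: "z ^ k - 1 = of_int b * \<gamma>" and b: "b \<ge> 3"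
  shows False
proof -
  have "(z ^ k) ^ N = 1"
    using zN by (metis mult.commute power_mult power_one)
  then obtain m p where p: "prime p" and \<omega>1: "(z ^ k) ^ m \<noteq> 1" and \<omega>p: "((z ^ k) ^ m) ^ p = 1"
    using exists_power_of_prime_order N zk by blast
  have "(z ^ k) ^ m - 1 = of_int b * (\<gamma> * (\<Sum>i<m. (z ^ k) ^ i))"
    using power_diff_1_eq[of "z ^ k" m] eq by (simp add: mult_ac)
  moreover have "\<gamma> * (\<Sum>i<m. (z ^ k) ^ i) \<in> int_adjoin z"
    using \<gamma> by blast
  ultimately show False
    using prime_order_minus_one_not_multiple[OF zN N p \<omega>p \<omega>1 _ _ b] by blast
qed

lemma linear_relation_large_multiple:
  fixes E F :: "'a :: field_char_0"
  assumes rel: "(of_nat n - 1) * E = (of_nat n + 1) * F" and n: "n > 1" "n \<noteq> 3"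
  obtains b i j :: int where "b \<ge> 3" and "E = of_int b * (of_int i * E + of_int j * F)"
proof (cases "even n")
  case True
  then obtain m where m: "n = 2 * m" by blast
  have "of_int (2 * int m + 1) * (of_int (1 - int m) * E + of_int (int m) * F) - E
      = of_nat m * ((of_nat n + 1) * F - (of_nat n - 1) * E)"
    unfolding m by (simp add: algebra_simps)
  hence "E = of_int (2 * int m + 1) * (of_int (1 - int m) * E + of_int (int m) * F)"
    using rel by simp
  moreover have "2 * int m + 1 \<ge> 3" using n m by simp
  ultimately show ?thesis using that by blast
next
  case False
  then obtain m where m: "n = 2 * m + 1" by (blast elim: oddE)
  have "2 * (of_nat m * E) = 2 * ((of_nat m + 1) * F)"
    using rel unfolding m by (simp add: algebra_simps)
  hence "of_nat m * E = (of_nat m + 1) * F" by simp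
  hence "E = of_int (int m + 1) * (of_int 1 * E + of_int (- 1) * F)"
    by (simp add: algebra_simps)
  moreover have "int m + 1 \<ge> 3" using n m by simp
  ultimately show ?thesis using that by blast
qed

lemma root_of_unity_no_tan_relation:
  fixes w :: "'a :: field_char_0"
  assumes wN: "w ^ N = 1" and N: "N > 0" and w2: "w\<^sup>2 \<noteq> 1" and n: "n > 1"
  shows "(of_nat n - 1) * (w ^ (n + 1) - 1) \<noteq> (of_nat n + 1) * (w ^ n - w)"
proof
  assume rel: "(of_nat n - 1) * (w ^ (n + 1) - 1) = (of_nat n + 1) * (w ^ n - w)"
  have "(of_nat n + 1 :: 'a) \<noteq> 0"
    by (metis of_nat_Suc of_nat_neq_0 add.commute)
  hence "w ^ (n + 1) \<noteq> 1"
    using rel w2 by (auto simp: power2_eq_square)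
  show False
  proof (cases "n = 3")
    case True
    hence "2 * ((w\<^sup>2 - 1) * (w - 1)\<^sup>2) = 0"
      using rel by (simp add: algebra_simps power2_eq_square power3_eq_cube power4_eq_xxxx)
    thus False using w2 by auto
  next
    case False
    then obtain b i j where b: "b \<ge> 3"
      and eq: "w ^ (n + 1) - 1 = of_int b * (of_int i * (w ^ (n + 1) - 1) + of_int j * (w ^ n - w))"
      using linear_relation_large_multiple[OF rel n] by blast
    have "of_int i * (w ^ (n + 1) - 1) + of_int j * (w ^ n - w) \<in> int_adjoin w"
      by blast
    from root_of_unity_minus_one_not_multiple[OF wN N \<open>w ^ (n + 1) \<noteq> 1\<close> this eq b]
    show False .
  qed
qed

lemma cis_double_minus_one: "cis (2 * x) - 1 = 2 * \<i> * complex_of_real (sin x) * cis x"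
  by (simp add: complex_eq_iff cos_double_sin sin_double power2_eq_square)

lemma cis_double_plus_one: "cis (2 * x) + 1 = 2 * complex_of_real (cos x) * cis x"
  by (simp add: complex_eq_iff cos_double_cos sin_double power2_eq_square)

lemma cis_double_tan_relation:
  fixes x :: real
  assumes "real n * sin x * cos (real n * x) = sin (real n * x) * cos x"
  shows "(of_nat n - 1) * (cis (2 * x) ^ (n + 1) - 1) = (of_nat n + 1) * (cis (2 * x) ^ n - cis (2 * x))"
proof -
  define w where "w = cis (2 * x)"
  have wn: "w ^ n = cis (2 * (real n * x))"
    unfolding w_def Complex.DeMoivre by (simp add: mult_ac)
  have "of_nat n * (w - 1) * (w ^ n + 1)
      = 4 * \<i> * cis x * cis (real n * x) * complex_of_real (real n * sin x * cos (real n * x))"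
    unfolding wn unfolding w_def cis_double_minus_one cis_double_plus_one by (simp add: mult_ac)
  also have "\<dots> = 4 * \<i> * cis x * cis (real n * x) * complex_of_real (sin (real n * x) * cos x)"
    using assms by simp
  also have "\<dots> = (w ^ n - 1) * (w + 1)"
    unfolding wn unfolding w_def cis_double_minus_one cis_double_plus_one by (simp add: mult_ac)
  finally show ?thesis
    unfolding w_def by (simp add: algebra_simps)
qed

lemma cis_rational_root_of_unity:
  assumes "x \<in> \<rat>"
  obtains N where "N > 0" and "cis (2 * pi * x) ^ N = 1"
proof -
  obtain a q where q: "q > 0" and x: "x = of_int a / of_int q"
    using Rats_cases'[OF assms] by metis
  have "cis (2 * pi * x) ^ nat q = cis (2 * pi * of_int a)"
    using q by (simp add: Complex.DeMoivre x)
  also have "\<dots> = 1" by simp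
  finally show ?thesis
    using q by (intro that[of "nat q"]) auto
qed

theorem theorem1:
  fixes \<rho> :: real
  assumes "\<rho> \<in> \<rat>" and "0 < \<rho>" and "\<rho> < 1" and "\<rho> \<noteq> 1/2"
  shows "\<not> (\<exists>n::nat. n > 1 \<and> real n * tan (pi * \<rho>) = tan (real n * pi * \<rho>))"
proof
  assume "\<exists>n::nat. n > 1 \<and> real n * tan (pi * \<rho>) = tan (real n * pi * \<rho>)"
  then obtain n :: nat where n: "n > 1" and eq: "real n * tan (pi * \<rho>) = tan (real n * (pi * \<rho>))"
    by (auto simp: mult.assoc)
  define \<theta> where "\<theta> = pi * \<rho>"
  have "0 < \<theta>" "\<theta> < pi"
    using assms(2,3) unfolding \<theta>_def by auto
  hence sin: "sin \<theta> > 0" and cos: "cos \<theta> \<noteq> 0"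
    using sin_gt_zero cos_inj_pi[of \<theta> "pi / 2"] assms(4) by (auto simp: \<theta>_def)
  hence "cos (real n * \<theta>) \<noteq> 0"
    using eq n by (auto simp: \<theta>_def tan_def)
  hence "real n * sin \<theta> * cos (real n * \<theta>) = sin (real n * \<theta>) * cos \<theta>"
    using eq cos by (simp add: \<theta>_def tan_def field_simps)
  from cis_double_tan_relation[OF this]
  have rel: "(of_nat n - 1) * (cis (2 * \<theta>) ^ (n + 1) - 1) = (of_nat n + 1) * (cis (2 * \<theta>) ^ n - cis (2 * \<theta>))" .
  obtain N where N: "N > 0" "cis (2 * \<theta>) ^ N = 1"
    using cis_rational_root_of_unity[OF assms(1)] by (metis \<theta>_def mult.assoc)
  have "(cis (2 * \<theta>) - 1) * (cis (2 * \<theta>) + 1) \<noteq> 0"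
    unfolding cis_double_minus_one cis_double_plus_one using sin cos by simp
  hence "cis (2 * \<theta>) ^ 2 \<noteq> 1"
    by (simp add: algebra_simps power2_eq_square)
  from root_of_unity_no_tan_relation[OF N(2,1) this n] rel show False ..
qed

end
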